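(* Let $G$ be a triangle-free graph with $n$ vertices and $e$ edges, and let $P$ be a greedy partition of $G$ of size $r=r(P)$ (equivalently, the size-$2$ cliques of $P$ form a maximal matching of $G$ with $n-r$ edges). Then $e\le r(n-r)$.
   Context: A good partition $P$ of $V(G)$ is a partition of $V(G)$ into disjoint sets $C_1, \dots, C_r$, each inducing a complete subgraph of $G$, indexed so that $|C_1|\le\dots\le |C_r|$; its size is $r(P)=r$. It is a greedy partition if for every $i\ge1$ the set $C_1\cup\dots\cup C_i$ induces a subgraph with no complete subgraph on $|C_i|+1$ vertices. For triangle-free $G$ the cliques have size $1$ or $2$. *)

theory Defs
  imports Main
begin

definition simple_graph :: "'a set \<Rightarrow> ('a \<Rightarrow> 'a \<Rightarrow> bool) \<Rightarrow> bool" where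
  "simple_graph V E \<longleftrightarrow> finite V \<and> (\<forall>u v. E u v \<longrightarrow> E v u)
     \<and> (\<forall>v. \<not> E v v) \<and> (\<forall>u v. E u v \<longrightarrow> u \<in> V \<and> v \<in> V)"

definition edges :: "'a set \<Rightarrow> ('a \<Rightarrow> 'a \<Rightarrow> bool) \<Rightarrow> 'a set set" where
  "edges V E = {{u, v} | u v. u \<in> V \<and> v \<in> V \<and> E u v}"

definition is_clique :: "('a \<Rightarrow> 'a \<Rightarrow> bool) \<Rightarrow> 'a set \<Rightarrow> bool" where
  "is_clique E K \<longleftrightarrow> (\<forall>u\<in>K. \<forall>v\<in>K. u \<noteq> v \<longrightarrow> E u v)"

definition triangle_free :: "'a set \<Rightarrow> ('a \<Rightarrow> 'a \<Rightarrow> bool) \<Rightarrow> bool" where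
  "triangle_free V E \<longleftrightarrow> \<not> (\<exists>K \<subseteq> V. card K = 3 \<and> is_clique E K)"

definition good_partition :: "'a set \<Rightarrow> ('a \<Rightarrow> 'a \<Rightarrow> bool) \<Rightarrow> 'a set list \<Rightarrow> bool" where
  "good_partition V E P \<longleftrightarrow>
     (\<forall>C\<in>set P. C \<noteq> {} \<and> is_clique E C)
     \<and> \<Union>(set P) = V
     \<and> (\<forall>i<length P. \<forall>j<length P. i \<noteq> j \<longrightarrow> P!i \<inter> P!j = {})
     \<and> sorted (map card P)"

definition greedy_partition :: "'a set \<Rightarrow> ('a \<Rightarrow> 'a \<Rightarrow> bool) \<Rightarrow> 'a set list \<Rightarrow> bool" where
  "greedy_partition V E P \<longleftrightarrow> good_partition V E P \<and>
     (\<forall>i<length P. \<not> (\<exists>K \<subseteq> \<Union>(set (take (Suc i) P)).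
                        card K = card (P!i) + 1 \<and> is_clique E K))"

end

theory Submission imports Defs begin

text \<open>Let \<open>Q\<close> be the parts of size two and \<open>S\<close> the union of the singleton parts, so that
  \<open>r = |S| + |Q|\<close> and \<open>n - r = |Q|\<close>. Greediness makes \<open>S\<close> independent. Adding the parts of
  \<open>Q\<close> one at a time to \<open>S\<close>, the edge \<open>ab\<close> brings at most \<open>1 + |W|\<close> new edges, \<open>W\<close> being
  the vertices already present, since in a triangle-free graph no vertex is adjacent to both
  \<open>a\<close> and \<open>b\<close>. Summing \<open>1 + |S| + 2k\<close> over \<open>k < |Q|\<close> gives \<open>|Q| (|Q| + |S|) = r (n - r)\<close>.\<close>

lemma edges_insert:
  assumes sym: "\<And>u v. E u v \<Longrightarrow> E v u"
  shows "edges (insert a W) E = edges W E \<union> (\<lambda>x. {a, x}) ` {x \<in> insert a W. E a x}"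
proof
  show "edges (insert a W) E \<subseteq> edges W E \<union> (\<lambda>x. {a, x}) ` {x \<in> insert a W. E a x}"
    unfolding edges_def using sym by (auto simp: insert_commute)
  show "edges W E \<union> (\<lambda>x. {a, x}) ` {x \<in> insert a W. E a x} \<subseteq> edges (insert a W) E"
    unfolding edges_def by blast
qed

lemma card_edges_insert_le:
  assumes "finite W" and sym: "\<And>u v. E u v \<Longrightarrow> E v u" and "\<not> E a a"
  shows "card (edges (insert a W) E) \<le> card (edges W E) + card {x \<in> W. E a x}"
proof -
  have "{x \<in> insert a W. E a x} = {x \<in> W. E a x}" using \<open>\<not> E a a\<close> by auto
  then have "card (edges (insert a W) E) \<le> card (edges W E) + card ((\<lambda>x. {a, x}) ` {x \<in> W. E a x})"
    by (simp add: edges_insert[OF sym] card_Un_le)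
  also have "\<dots> \<le> card (edges W E) + card {x \<in> W. E a x}"
    using \<open>finite W\<close> by (simp add: card_image_le)
  finally show ?thesis .
qed

lemma card_edges_insert_edge:
  assumes "finite W" and sym: "\<And>u v. E u v \<Longrightarrow> E v u"
    and tri: "\<And>x y z. E x y \<Longrightarrow> E y z \<Longrightarrow> \<not> E x z" and "E a b"
  shows "card (edges (insert a (insert b W)) E) \<le> card (edges W E) + card W + 1"
proof -
  have irrefl: "\<not> E v v" for v using tri by blast
  define Na where "Na = {x \<in> W. E a x}"
  define Nb where "Nb = {x \<in> W. E b x}"
  have "card {x \<in> insert b W. E a x} \<le> card (insert b Na)"
    by (rule card_mono) (auto simp: Na_def \<open>finite W\<close>)
  also have "\<dots> \<le> card Na + 1"
    by (simp add: card_insert_if Na_def \<open>finite W\<close>)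
  finally have "card {x \<in> insert b W. E a x} \<le> card Na + 1" .
  moreover have "Na \<inter> Nb = {}"
    unfolding Na_def Nb_def using tri[of a _ b] sym \<open>E a b\<close> by blast
  then have "card Na + card Nb \<le> card W"
    using \<open>finite W\<close> card_Un_disjoint[of Na Nb] card_mono[of W "Na \<union> Nb"]
    by (simp add: Na_def Nb_def)
  ultimately show ?thesis
    using card_edges_insert_le[of "insert b W" E a, OF _ sym irrefl]
      card_edges_insert_le[of W E b, OF \<open>finite W\<close> sym irrefl] \<open>finite W\<close>
    unfolding Na_def Nb_def by simp
qed

lemma card_edges_independent_plus_matching:
  assumes "finite Q" "finite S" and sym: "\<And>u v. E u v \<Longrightarrow> E v u"
    and tri: "\<And>x y z. E x y \<Longrightarrow> E y z \<Longrightarrow> \<not> E x z"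
    and matching: "\<forall>p\<in>Q. \<exists>a b. p = {a, b} \<and> E a b"
    and independent: "\<forall>u\<in>S. \<forall>v\<in>S. \<not> E u v"
  shows "card (edges (S \<union> \<Union>Q) E) \<le> card Q * (card Q + card S)"
  using \<open>finite Q\<close> matching
proof (induction Q rule: finite_induct)
  case empty
  have "edges S E = {}" using independent unfolding edges_def by auto
  then show ?case by simp
next
  case (insert p Q)
  obtain a b where p: "p = {a, b}" "E a b" using insert.prems by auto
  have "card (\<Union>Q) \<le> (\<Sum>q\<in>Q. card q)" by (rule card_Union_le_sum_card)
  also have "\<dots> \<le> (\<Sum>q\<in>Q. 2)"
    using insert.prems by (intro sum_mono) (auto simp: card_insert_if)
  finally have "card (S \<union> \<Union>Q) \<le> card S + 2 * card Q"
    using card_Un_le[of S "\<Union>Q"] by simp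
  moreover have "finite (S \<union> \<Union>Q)" using \<open>finite S\<close> insert.hyps(1) insert.prems by auto
  ultimately have "card (edges (insert a (insert b (S \<union> \<Union>Q))) E)
      \<le> card (edges (S \<union> \<Union>Q) E) + card S + 2 * card Q + 1"
    using card_edges_insert_edge[of "S \<union> \<Union>Q" E a b, OF _ sym tri \<open>E a b\<close>] by fastforce
  moreover have "S \<union> \<Union>(insert p Q) = insert a (insert b (S \<union> \<Union>Q))" using p by auto
  ultimately show ?case using insert by (simp add: algebra_simps)
qed

lemma simple_graph_no_triangle:
  assumes "simple_graph V E" "triangle_free V E" "E x y" "E y z"
  shows "\<not> E x z"
proof
  assume "E x z"
  have "x \<noteq> y" "y \<noteq> z" "x \<noteq> z" "{x, y, z} \<subseteq> V" "E y x" "E z y" "E z x"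
    using assms \<open>E x z\<close> unfolding simple_graph_def by blast+
  then have "{x, y, z} \<subseteq> V \<and> card {x, y, z} = 3 \<and> is_clique E {x, y, z}"
    using assms \<open>E x z\<close> unfolding is_clique_def by auto
  with \<open>triangle_free V E\<close> show False unfolding triangle_free_def by blast
qed

lemma triangle_free_card_clique_le:
  assumes "triangle_free V E" "K \<subseteq> V" "is_clique E K"
  shows "card K \<le> 2"
proof (rule ccontr)
  assume "\<not> card K \<le> 2"
  then have "3 \<le> card K" by linarith
  then obtain T where "T \<subseteq> K" "card T = 3" by (rule obtain_subset_with_card_n)
  moreover from \<open>T \<subseteq> K\<close> have "is_clique E T" using \<open>is_clique E K\<close> unfolding is_clique_def by blast
  ultimately show False using assms unfolding triangle_free_def by blast
qed

lemma good_partition_pairwise_disjnt: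
  assumes "good_partition V E P"
  shows "pairwise disjnt (set P)"
  using assms unfolding good_partition_def pairwise_def disjnt_def
  by (metis in_set_conv_nth)

lemma good_partition_distinct:
  assumes "good_partition V E P"
  shows "distinct P"
  unfolding distinct_conv_nth
  using assms unfolding good_partition_def by (metis Int_absorb nth_mem)

lemma triangle_free_good_partition_card_part:
  assumes "simple_graph V E" "triangle_free V E" "good_partition V E P" "C \<in> set P"
  shows "card C = 1 \<or> card C = 2"
proof -
  have "C \<subseteq> V" "C \<noteq> {}" "is_clique E C" "finite V"
    using assms unfolding good_partition_def simple_graph_def by auto
  then have "card C \<noteq> 0" "card C \<le> 2"
    using triangle_free_card_clique_le[OF \<open>triangle_free V E\<close>] finite_subset[of C V] by auto
  then show ?thesis by linarith
qed

lemma good_partition_pair_part_edge: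
  assumes "good_partition V E P" "C \<in> set P" "card C = 2"
  obtains a b where "C = {a, b}" "E a b"
proof -
  obtain a b where "C = {a, b}" "a \<noteq> b" using \<open>card C = 2\<close> by (auto simp: card_2_iff)
  moreover have "is_clique E C" using assms(1,2) unfolding good_partition_def by blast
  ultimately show ?thesis using that unfolding is_clique_def by blast
qed

text \<open>Greediness at the later of the two singletons forbids a clique on two vertices among
  the parts up to it.\<close>
lemma greedy_partition_singletons_independent:
  assumes "simple_graph V E" "greedy_partition V E P"
    and "C \<in> set P" "D \<in> set P" "card C = 1" "card D = 1" "u \<in> C" "v \<in> D"
  shows "\<not> E u v"
proof
  assume "E u v"
  obtain j k where jk: "j < length P" "P ! j = C" "k < length P" "P ! k = D"
    using assms(3,4) by (auto simp: in_set_conv_nth)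
  define i where "i = max j k"
  have "i < length P" "card (P ! i) = 1" using jk assms(5,6) unfolding i_def by (auto simp: max_def)
  have "C \<in> set (take (Suc i) P)" "D \<in> set (take (Suc i) P)"
    using jk unfolding i_def by (metis in_set_conv_nth length_take min_less_iff_conj
        nth_take less_Suc_eq_le max.cobounded1 max.cobounded2)+
  then have "{u, v} \<subseteq> \<Union>(set (take (Suc i) P))" using assms(7,8) by blast
  moreover have "u \<noteq> v" "E v u" using assms(1) \<open>E u v\<close> unfolding simple_graph_def by auto
  then have "card {u, v} = card (P ! i) + 1" "is_clique E {u, v}"
    using \<open>card (P ! i) = 1\<close> \<open>E u v\<close> unfolding is_clique_def by auto
  ultimately show False using assms(2) \<open>i < length P\<close> unfolding greedy_partition_def by blast
qed

lemma good_partition_card_eq_sum: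
  assumes "finite V" "good_partition V E P"
  shows "card V = (\<Sum>C\<in>set P. card C)"
proof -
  have "\<Union>(set P) = V" using assms(2) unfolding good_partition_def by blast
  then show ?thesis
    using card_Union_disjoint[OF good_partition_pairwise_disjnt[OF assms(2)]] assms(1)
    by (metis Union_upper finite_subset)
qed

lemma triangle_free_good_partition_counts:
  assumes "simple_graph V E" "triangle_free V E" "good_partition V E P"
  shows "length P = card {C \<in> set P. card C = 1} + card {C \<in> set P. card C = 2}"
    and "card V = card {C \<in> set P. card C = 1} + 2 * card {C \<in> set P. card C = 2}"
proof -
  have split: "set P = {C \<in> set P. card C = 1} \<union> {C \<in> set P. card C = 2}"
    using triangle_free_good_partition_card_part[OF assms] by blast
  have disjoint: "{C \<in> set P. card C = 1} \<inter> {C \<in> set P. card C = 2} = {}" by auto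
  show "length P = card {C \<in> set P. card C = 1} + card {C \<in> set P. card C = 2}"
    using distinct_card[OF good_partition_distinct[OF assms(3)]] card_Un_disjoint[OF _ _ disjoint]
    by (metis (no_types, lifting) finite_set finite_Un split)
  have "card V = (\<Sum>C\<in>set P. card C)"
    using assms(1) by (intro good_partition_card_eq_sum[OF _ assms(3)]) (simp add: simple_graph_def)
  also have "\<dots> = (\<Sum>C\<in>{C \<in> set P. card C = 1}. card C) + (\<Sum>C\<in>{C \<in> set P. card C = 2}. card C)"
    by (subst split) (rule sum.union_disjoint, auto)
  also have "\<dots> = card {C \<in> set P. card C = 1} + 2 * card {C \<in> set P. card C = 2}"
    by simp
  finally show "card V = card {C \<in> set P. card C = 1} + 2 * card {C \<in> set P. card C = 2}" .
qed

theorem claim7: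
  fixes V :: "'a set" and E :: "'a \<Rightarrow> 'a \<Rightarrow> bool" and P :: "'a set list"
  assumes "simple_graph V E"
    and "triangle_free V E"
    and "greedy_partition V E P"
  shows "card (edges V E) \<le> length P * (card V - length P)"
proof -
  have good: "good_partition V E P" using assms(3) unfolding greedy_partition_def by blast
  have sym: "\<And>u v. E u v \<Longrightarrow> E v u" using assms(1) unfolding simple_graph_def by blast
  note tri = simple_graph_no_triangle[OF assms(1,2)]
  define S1 where "S1 = {C \<in> set P. card C = 1}"
  define Q where "Q = {C \<in> set P. card C = 2}"
  have "length P = card S1 + card Q" "card V = card S1 + 2 * card Q"
    using triangle_free_good_partition_counts[OF assms(1,2) good] unfolding S1_def Q_def by auto
  then have bound: "length P * (card V - length P) = card Q * (card Q + card S1)" by simp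
  have "V = \<Union>S1 \<union> \<Union>Q"
    using good triangle_free_good_partition_card_part[OF assms(1,2) good]
    unfolding good_partition_def S1_def Q_def by blast
  moreover have "card (\<Union>S1) \<le> card S1"
    using card_Union_le_sum_card[of S1] by (simp add: S1_def)
  moreover have "\<forall>p\<in>Q. \<exists>a b. p = {a, b} \<and> E a b"
    using good_partition_pair_part_edge[OF good] unfolding Q_def by blast
  moreover have "\<forall>u\<in>\<Union>S1. \<forall>v\<in>\<Union>S1. \<not> E u v"
    using greedy_partition_singletons_independent[OF assms(1,3)] unfolding S1_def by blast
  moreover have "finite (\<Union>S1)"
    using assms(1) \<open>V = \<Union>S1 \<union> \<Union>Q\<close> unfolding simple_graph_def by (metis finite_Un)
  ultimately have "card (edges V E) \<le> card Q * (card Q + card (\<Union>S1))"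
    using card_edges_independent_plus_matching[of Q "\<Union>S1" E, OF _ _ sym tri]
    unfolding Q_def by simp
  also have "\<dots> \<le> card Q * (card Q + card S1)" using \<open>card (\<Union>S1) \<le> card S1\<close> by simp
  finally show ?thesis using bound by simp
qed

end
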